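(* Let $L$ be an even hyperbolic lattice and $L'$ an even overlattice of $L$. Then there exist chambers $\mathcal D_L$ of $L$ and $\mathcal D_{L'}$ of $L'$ (in the common hyperbolic space $\mathbb H_L=\mathbb H_{L'}$) such that $\mathcal D_{L'}\subseteq\mathcal D_L$. For such choices, the exceptional lattices satisfy $E(L)\subseteq E(L')$.
   Context: All lattices are even: a lattice is a free $\mathbb Z$-module $L$ of finite rank with a non-degenerate symmetric bilinear form $(x.y)\in\mathbb Z$ such that $x^2:=(x.x)$ is even for all $x$. $L$ is hyperbolic if its signature is $(1,\mathrm{rk}L-1)$. A root is a vector $r\in L$ with $r^2=-2$. For hyperbolic $L$, fix a connected component $\mathcal P_L$ of $\{x\in L\otimes\mathbb R: x^2>0\}$, let $\mathbb H_L=\{x\in\mathcal P_L: x^2=1\}$, and let $O^+(L)$ be the group of isometries of $L$ preserving $\mathcal P_L$. The Weyl group $W(L)\subseteq O^+(L)$ is generated by the reflections $\phi_r(v)=v+(v.r)r$ for roots $r$. The chambers are the connected components of $\mathbb H_L\setminus\bigcup_r r^\perp$ (union over all roots $r$); $W(L)$ acts simply transitively on them. Fix a chamber $\mathcal D_L$; the symmetry group $\mathrm{Aut}(\mathcal D_L)$ is the subgroup of $O^+(L)$ preserving $\mathcal D_L$. The exceptional lattice $E(L)\subseteq L$ is the sublattice of vectors of $L$ whose orbit under $\mathrm{Aut}(\mathcal D_L)$ is finite. An overlattice of $L$ is a lattice $L'\supseteq L$ of the same rank whose form restricts to that of $L$. *)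

theory Defs
  imports "HOL-Analysis.Analysis"
begin

text \<open>Ambient space: the real vector space real^'n, equipped with the bilinear
form given by a symmetric matrix Q. Lattices are full-rank Z-lattices in it, so
L \<otimes> R = real^'n, and an overlattice of L is simply a full-rank lattice containing
L on which the same form is used.\<close>

definition bform :: "real^'n^'n \<Rightarrow> real^'n \<Rightarrow> real^'n \<Rightarrow> real" where
  "bform Q x y = x \<bullet> (Q *v y)"

definition hyperbolic_form :: "real^'n^'n \<Rightarrow> bool" where
  "hyperbolic_form Q \<longleftrightarrow> transpose Q = Q \<and>
     (\<exists>(P::real^'n^'n) i0. invertible P \<and>
        (\<forall>i j. (transpose P ** Q ** P) $ i $ j =
                 (if i = j then (if i = i0 then 1 else -1) else 0)))"

definition full_lattice :: "(real^'n) set \<Rightarrow> bool" where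
  "full_lattice L \<longleftrightarrow> (\<exists>b :: 'n \<Rightarrow> real^'n. inj b \<and> independent (range b) \<and>
      L = {(\<Sum>i\<in>UNIV. c i *\<^sub>R b i) | c. \<forall>i. c i \<in> \<int>})"

definition even_lattice :: "real^'n^'n \<Rightarrow> (real^'n) set \<Rightarrow> bool" where
  "even_lattice Q L \<longleftrightarrow> full_lattice L \<and>
      (\<forall>x\<in>L. \<forall>y\<in>L. bform Q x y \<in> \<int>) \<and>
      (\<forall>x\<in>L. \<exists>k::int. bform Q x x = 2 * of_int k)"

definition roots :: "real^'n^'n \<Rightarrow> (real^'n) set \<Rightarrow> (real^'n) set" where
  "roots Q L = {r \<in> L. bform Q r r = -2}"

text \<open>Hyperbolic space inside the fixed component C of the positive cone.\<close>
definition hyp_space :: "real^'n^'n \<Rightarrow> (real^'n) set \<Rightarrow> (real^'n) set" where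
  "hyp_space Q C = {x \<in> C. bform Q x x = 1}"

definition chamber :: "real^'n^'n \<Rightarrow> (real^'n) set \<Rightarrow> (real^'n) set \<Rightarrow> (real^'n) set \<Rightarrow> bool" where
  "chamber Q L C D \<longleftrightarrow>
     (let S = hyp_space Q C - (\<Union>r\<in>roots Q L. {x. bform Q x r = 0})
      in \<exists>x\<in>S. D = connected_component_set S x)"

text \<open>O^+(L): isometries of L (extended linearly, i.e. as matrices) preserving C.\<close>
definition Oplus :: "real^'n^'n \<Rightarrow> (real^'n) set \<Rightarrow> (real^'n) set \<Rightarrow> (real^'n^'n) set" where
  "Oplus Q L C = {g. (\<lambda>v. g *v v) ` L = L \<and>
      (\<forall>x\<in>L. \<forall>y\<in>L. bform Q (g *v x) (g *v y) = bform Q x y) \<and>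
      (\<lambda>v. g *v v) ` C = C}"

definition Aut_chamber :: "real^'n^'n \<Rightarrow> (real^'n) set \<Rightarrow> (real^'n) set \<Rightarrow> (real^'n) set \<Rightarrow> (real^'n^'n) set" where
  "Aut_chamber Q L C D = {g \<in> Oplus Q L C. (\<lambda>v. g *v v) ` D = D}"

definition exceptional_lattice :: "real^'n^'n \<Rightarrow> (real^'n) set \<Rightarrow> (real^'n) set \<Rightarrow> (real^'n) set \<Rightarrow> (real^'n) set" where
  "exceptional_lattice Q L C D = {v \<in> L. finite ((\<lambda>g. g *v v) ` Aut_chamber Q L C D)}"

end

theory Submission
  imports Defs
begin

text \<open>
  The hyperplanes orthogonal to the roots of \<open>L'\<close> form a countable, hence negligible,
  family, while the component \<open>C\<close> of the positive cone is open and closed under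
  positive scaling; so some point \<open>z\<close> of the hyperbolic space lies on no wall of \<open>L'\<close>.
  Since the roots of \<open>L\<close> are roots of \<open>L'\<close>, the chamber of \<open>L'\<close> through \<open>z\<close> lies in
  the chamber of \<open>L\<close> through \<open>z\<close>.

  For the exceptional lattices let \<open>G = Aut(D')\<close>. By Cramer's rule \<open>N L' \<subseteq> L\<close> for some
  \<open>N > 0\<close>, so the lattices \<open>g L\<close>, \<open>g \<in> G\<close>, lie between \<open>N L'\<close> and \<open>L'\<close> and there are only
  finitely many of them. If \<open>g L = h L\<close> then \<open>k = h\<^sup>-\<^sup>1 g\<close> preserves \<open>L\<close> and \<open>D'\<close>,
  hence permutes the walls of \<open>L\<close>; the connected set \<open>k D\<close> avoids these walls and meets
  \<open>k D' = D' \<subseteq> D\<close>, so \<open>k D \<subseteq> D\<close>, and likewise for \<open>k\<^sup>-\<^sup>1\<close>. Hence \<open>k \<in> Aut(D)\<close>, and the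
  \<open>G\<close>-orbit of \<open>v\<close> is covered by finitely many translates of its \<open>Aut(D)\<close>-orbit.
\<close>

section \<open>Full-rank lattices\<close>

definition zspan :: "('m::finite \<Rightarrow> real^'n) \<Rightarrow> (real^'n) set" where
  "zspan b = {(\<Sum>i\<in>UNIV. c i *\<^sub>R b i) | c. \<forall>i. c i \<in> \<int>}"

lemma sum_indicator_scaleR:
  fixes b :: "'m::finite \<Rightarrow> real^'n"
  shows "(\<Sum>j\<in>UNIV. (if j = i then 1 else 0) *\<^sub>R b j) = b i"
proof -
  have "(\<Sum>j\<in>UNIV. (if j = i then 1 else 0) *\<^sub>R b j) = (\<Sum>j\<in>UNIV. if j = i then b j else 0)"
    by (rule sum.cong) auto
  then show ?thesis by simp
qed

lemma basis_in_zspan: "b i \<in> zspan b"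
  unfolding zspan_def
  by (intro CollectI exI[of _ "\<lambda>j. if j = i then 1 else 0"]) (auto simp: sum_indicator_scaleR)

lemma full_lattice_basis:
  fixes L :: "(real^'n) set"
  assumes "full_lattice L"
  obtains b :: "'n \<Rightarrow> real^'n" where "span (range b) = UNIV" "L = zspan b"
proof -
  obtain b :: "'n \<Rightarrow> real^'n" where b: "inj b" "independent (range b)" "L = zspan b"
    using assms unfolding full_lattice_def zspan_def by blast
  have "card (range b) = CARD('n)" using b(1) by (simp add: card_image)
  then have "span (range b) = UNIV"
    using card_ge_dim_independent[of "range b" UNIV] b(2) by auto
  with b(3) show ?thesis using that by blast
qed

lemma span_full_lattice:
  fixes L :: "(real^'n) set"
  assumes "full_lattice L"
  shows "span L = UNIV"
proof -
  obtain b :: "'n \<Rightarrow> real^'n" where "span (range b) = UNIV" "L = zspan b"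
    using assms by (rule full_lattice_basis)
  moreover have "range b \<subseteq> zspan b" using basis_in_zspan by blast
  ultimately show ?thesis by (metis span_mono top.extremum_uniqueI)
qed

lemma zspan_add:
  assumes "x \<in> zspan b" "y \<in> zspan b"
  shows "x + y \<in> zspan b"
proof -
  obtain c d where "x = (\<Sum>i\<in>UNIV. c i *\<^sub>R b i)" "\<forall>i. c i \<in> \<int>"
    "y = (\<Sum>i\<in>UNIV. d i *\<^sub>R b i)" "\<forall>i. d i \<in> \<int>"
    using assms unfolding zspan_def by blast
  then show ?thesis unfolding zspan_def
    by (intro CollectI exI[of _ "\<lambda>i. c i + d i"]) (auto simp: scaleR_add_left sum.distrib)
qed

lemma zspan_diff:
  assumes "x \<in> zspan b" "y \<in> zspan b"
  shows "x - y \<in> zspan b"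
proof -
  obtain c d where "x = (\<Sum>i\<in>UNIV. c i *\<^sub>R b i)" "\<forall>i. c i \<in> \<int>"
    "y = (\<Sum>i\<in>UNIV. d i *\<^sub>R b i)" "\<forall>i. d i \<in> \<int>"
    using assms unfolding zspan_def by blast
  then show ?thesis unfolding zspan_def
    by (intro CollectI exI[of _ "\<lambda>i. c i - d i"]) (auto simp: scaleR_diff_left sum_subtractf)
qed

lemma zspan_eq_image_int:
  fixes b :: "'m::finite \<Rightarrow> real^'n"
  shows "zspan b = range (\<lambda>z. \<Sum>i\<in>UNIV. of_int (z i) *\<^sub>R b i)"
proof (rule set_eqI)
  fix x
  have floor_eq: "c \<in> \<int> \<Longrightarrow> of_int \<lfloor>c\<rfloor> = c" for c :: real
    by (erule Ints_cases) simp
  show "x \<in> zspan b \<longleftrightarrow> x \<in> range (\<lambda>z. \<Sum>i\<in>UNIV. of_int (z i) *\<^sub>R b i)"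
  proof
    assume "x \<in> zspan b"
    then obtain c where "x = (\<Sum>i\<in>UNIV. c i *\<^sub>R b i)" "\<forall>i. c i \<in> \<int>"
      unfolding zspan_def by blast
    then show "x \<in> range (\<lambda>z. \<Sum>i\<in>UNIV. of_int (z i) *\<^sub>R b i)"
      by (intro range_eqI[where x="\<lambda>i. \<lfloor>c i\<rfloor>"]) (simp add: floor_eq)
  qed (auto simp: zspan_def)
qed

lemma countable_zspan: "countable (zspan (b :: 'm::finite \<Rightarrow> real^'n))"
  unfolding zspan_eq_image_int by simp

definition basis_matrix :: "('n \<Rightarrow> real^'n) \<Rightarrow> real^'n^'n" where
  "basis_matrix b = (\<chi> k i. b i $ k)"

lemma basis_matrix_mult: "basis_matrix b *v t = (\<Sum>i\<in>UNIV. t $ i *\<^sub>R b i)"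
  by (simp add: vec_eq_iff matrix_vector_mult_def basis_matrix_def sum_component mult.commute)

lemma zspan_eq_basis_matrix_image: "zspan b = {basis_matrix b *v t | t. \<forall>i. t $ i \<in> \<int>}"
proof -
  have "(\<exists>c. x = (\<Sum>i\<in>UNIV. c i *\<^sub>R b i) \<and> (\<forall>i. c i \<in> \<int>)) \<longleftrightarrow>
        (\<exists>t. x = basis_matrix b *v t \<and> (\<forall>i. t $ i \<in> \<int>))" for x
  proof
    assume "\<exists>c. x = (\<Sum>i\<in>UNIV. c i *\<^sub>R b i) \<and> (\<forall>i. c i \<in> \<int>)"
    then obtain c where "x = (\<Sum>i\<in>UNIV. c i *\<^sub>R b i)" "\<forall>i. c i \<in> \<int>" by blast
    then show "\<exists>t. x = basis_matrix b *v t \<and> (\<forall>i. t $ i \<in> \<int>)"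
      by (intro exI[where x="\<chi> i. c i"]) (simp add: basis_matrix_mult)
  qed (auto simp: basis_matrix_mult)
  then show ?thesis unfolding zspan_def by blast
qed

lemma det_Ints:
  fixes M :: "real^'n^'n"
  assumes "\<And>i j. M $ i $ j \<in> \<int>"
  shows "det M \<in> \<int>"
  unfolding det_def using assms by (intro Ints_sum Ints_mult Ints_prod) auto

lemma invertible_basis_matrix:
  assumes "span (range b) = UNIV"
  shows "invertible (basis_matrix b)"
proof -
  have "b i = basis_matrix b *v axis i 1" for i
    by (simp add: basis_matrix_mult axis_def sum_indicator_scaleR)
  then have "range b \<subseteq> range ((*v) (basis_matrix b))" by blast
  then have "span (range b) \<subseteq> range ((*v) (basis_matrix b))"
    by (intro span_minimal) (auto intro: linear_subspace_image matrix_vector_mul_linear)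
  then have "surj ((*v) (basis_matrix b))" using assms by auto
  then show ?thesis
    using invertible_right_inverse matrix_right_invertible_surjective by blast
qed

lemma zspan_finite_index:
  fixes a b :: "'n \<Rightarrow> real^'n"
  assumes "span (range a) = UNIV" "range a \<subseteq> zspan b"
  obtains N :: int where "N > 0" "\<And>x. x \<in> zspan b \<Longrightarrow> of_int N *\<^sub>R x \<in> zspan a"
proof -
  have "\<forall>j. \<exists>t. a j = basis_matrix b *v t \<and> (\<forall>i. t $ i \<in> \<int>)"
    using assms(2) unfolding zspan_eq_basis_matrix_image by blast
  then obtain z where z: "\<And>j. a j = basis_matrix b *v z j" "\<And>i j. z j $ i \<in> \<int>"
    by metis
  define Z :: "real^'n^'n" where "Z = (\<chi> i j. z j $ i)"
  have "basis_matrix a = basis_matrix b ** Z"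
    by (simp add: vec_eq_iff basis_matrix_def matrix_matrix_mult_def Z_def z(1)
        matrix_vector_mult_def mult.commute)
  then have "det Z \<noteq> 0"
    using invertible_basis_matrix[OF assms(1)] by (simp add: invertible_det_nz det_mul)
  moreover obtain d :: int where d: "det Z = of_int d"
    using det_Ints[of Z] z(2) unfolding Z_def by (auto elim: Ints_cases)
  ultimately have "d * d > 0" by (simp add: zero_less_mult_iff) arith
  moreover have "of_int (d * d) *\<^sub>R x \<in> zspan a" if x: "x \<in> zspan b" for x
  proof -
    obtain t where t: "x = basis_matrix b *v t" "\<And>i. t $ i \<in> \<int>"
      using x unfolding zspan_eq_basis_matrix_image by blast
    define s where "s = (\<chi> k. det (\<chi> i j. if j = k then t $ i else Z $ i $ j) / det Z)"
    have "Z *v s = t" using cramer[OF \<open>det Z \<noteq> 0\<close>] s_def by simp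
    then have "x = basis_matrix a *v s"
      by (simp add: t(1) \<open>basis_matrix a = _\<close> matrix_vector_mul_assoc[symmetric])
    moreover have "det Z * s $ k \<in> \<int>" for k
      using \<open>det Z \<noteq> 0\<close> t(2) z(2) by (simp add: s_def Z_def det_Ints)
    then have "of_int (d * d) * s $ k \<in> \<int>" for k
      by (metis Ints_mult Ints_of_int d mult.assoc of_int_mult)
    ultimately show ?thesis unfolding zspan_eq_basis_matrix_image
      by (intro CollectI exI[of _ "of_int (d * d) *\<^sub>R s"])
        (simp add: matrix_vector_mult_scaleR)
  qed
  ultimately show ?thesis using that by blast
qed

lemma full_lattice_finite_index:
  fixes L L' :: "(real^'n) set"
  assumes "full_lattice L" "full_lattice L'" "L \<subseteq> L'"
  obtains N :: int where "N > 0" "\<And>x. x \<in> L' \<Longrightarrow> of_int N *\<^sub>R x \<in> L"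
proof -
  obtain a :: "'n \<Rightarrow> real^'n" where a: "span (range a) = UNIV" "L = zspan a"
    using assms(1) by (rule full_lattice_basis)
  obtain b :: "'n \<Rightarrow> real^'n" where b: "L' = zspan b"
    using assms(2) by (rule full_lattice_basis)
  have "range a \<subseteq> zspan b" using basis_in_zspan a(2) b assms(3) by blast
  then show ?thesis using zspan_finite_index[OF a(1)] a(2) b that by blast
qed

lemma finite_intermediate_lattices:
  fixes b :: "'m::finite \<Rightarrow> real^'n" and N :: int
  assumes "N > 0"
  shows "finite {M. M \<subseteq> zspan b \<and> (\<forall>x\<in>zspan b. of_int N *\<^sub>R x \<in> M) \<and>
                   (\<forall>x\<in>M. \<forall>y\<in>M. x + y \<in> M \<and> x - y \<in> M)}" (is "finite ?Fam")
proof -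
  define comb where "comb z = (\<Sum>i\<in>UNIV. of_int (z i) *\<^sub>R b i)" for z :: "'m \<Rightarrow> int"
  define F where "F = comb ` Pi UNIV (\<lambda>_. {0..<N})"
  have "finite (PiE (UNIV :: 'm set) (\<lambda>_. {0..<N}))" by (intro finite_PiE) auto
  then have "finite F" unfolding F_def PiE_UNIV_domain by (rule finite_imageI)
  have residue: "\<exists>f\<in>F. \<exists>y\<in>zspan b. x = f + of_int N *\<^sub>R y" if x: "x \<in> zspan b" for x
  proof -
    obtain z where z: "x = comb z" using x unfolding zspan_eq_image_int comb_def by blast
    have "x = comb (\<lambda>i. z i mod N) + of_int N *\<^sub>R comb (\<lambda>i. z i div N)"
    proof -
      have "of_int (z i) = (of_int (z i mod N) + of_int N * of_int (z i div N) :: real)" for i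
        by (metis mod_mult_div_eq of_int_add of_int_mult)
      then show ?thesis
        unfolding z comb_def by (simp add: scaleR_add_left sum.distrib scaleR_sum_right)
    qed
    moreover have "comb (\<lambda>i. z i mod N) \<in> F" unfolding F_def using assms by auto
    moreover have "comb (\<lambda>i. z i div N) \<in> zspan b" unfolding zspan_eq_image_int comb_def by simp
    ultimately show ?thesis by blast
  qed
  have determined_by_residues: "M \<subseteq> M'"
    if M: "M \<in> ?Fam" and M': "M' \<in> ?Fam" and eq: "M \<inter> F = M' \<inter> F" for M M'
  proof
    fix x assume "x \<in> M"
    then obtain f y where fy: "f \<in> F" "y \<in> zspan b" "x = f + of_int N *\<^sub>R y"
      using residue M by blast
    have "of_int N *\<^sub>R y \<in> M" "of_int N *\<^sub>R y \<in> M'" using fy(2) M M' by simp_all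
    moreover have "f = x - of_int N *\<^sub>R y" using fy(3) by simp
    ultimately have "f \<in> M" using \<open>x \<in> M\<close> M by simp
    then have "f \<in> M'" using fy(1) eq by blast
    then show "x \<in> M'" using fy(3) \<open>of_int N *\<^sub>R y \<in> M'\<close> M' by simp
  qed
  have "inj_on (\<lambda>M. M \<inter> F) ?Fam"
  proof (rule inj_onI)
    fix M M' assume "M \<in> ?Fam" "M' \<in> ?Fam" "M \<inter> F = M' \<inter> F"
    then show "M = M'"
      using determined_by_residues[of M M'] determined_by_residues[of M' M] by (intro subset_antisym) auto
  qed
  moreover have "(\<lambda>M. M \<inter> F) ` ?Fam \<subseteq> Pow F" by auto
  moreover have "finite (Pow F)" using \<open>finite F\<close> by simp
  ultimately show ?thesis by (rule inj_on_finite)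
qed

lemma finite_images_of_sublattice:
  fixes L L' :: "(real^'n) set"
  assumes "full_lattice L" "full_lattice L'" "L \<subseteq> L'"
  shows "finite ((\<lambda>g. (\<lambda>x. g *v x) ` L) ` {g. (\<lambda>x. g *v x) ` L' = L'})"
proof -
  obtain N where N: "N > 0" "\<And>x. x \<in> L' \<Longrightarrow> of_int N *\<^sub>R x \<in> L"
    using full_lattice_finite_index[OF assms] by blast
  obtain a :: "'n \<Rightarrow> real^'n" where a: "L = zspan a"
    using assms(1) full_lattice_basis by blast
  obtain b :: "'n \<Rightarrow> real^'n" where b: "L' = zspan b"
    using assms(2) full_lattice_basis by blast
  let ?M = "\<lambda>g. (\<lambda>x. g *v x) ` L"
  have "?M g \<in> {M. M \<subseteq> zspan b \<and> (\<forall>x\<in>zspan b. of_int N *\<^sub>R x \<in> M) \<and>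
                   (\<forall>x\<in>M. \<forall>y\<in>M. x + y \<in> M \<and> x - y \<in> M)}"
    if g: "(\<lambda>x. g *v x) ` L' = L'" for g
  proof (intro CollectI conjI ballI)
    show "?M g \<subseteq> zspan b" using g assms(3) b by blast
  next
    fix x assume "x \<in> zspan b"
    then obtain x' where "x' \<in> L'" "x = g *v x'" using g b by blast
    then show "of_int N *\<^sub>R x \<in> ?M g"
      using N(2) by (auto simp: matrix_vector_mult_scaleR intro!: image_eqI[of _ _ "of_int N *\<^sub>R x'"])
  next
    fix x y assume "x \<in> ?M g" "y \<in> ?M g"
    then obtain x' y' where xy: "x' \<in> L" "y' \<in> L" "x = g *v x'" "y = g *v y'" by blast
    then have "x + y = g *v (x' + y')" "x - y = g *v (x' - y')"
      by (simp_all add: matrix_vector_right_distrib matrix_vector_mult_diff_distrib)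
    moreover have "x' + y' \<in> L" "x' - y' \<in> L"
      using xy(1,2) unfolding a by (simp_all add: zspan_add zspan_diff)
    ultimately show "x + y \<in> ?M g" "x - y \<in> ?M g" by blast+
  qed
  then show ?thesis
    by (intro finite_subset[OF _ finite_intermediate_lattices[OF N(1), of b]]) blast
qed

section \<open>Chambers of nested lattices\<close>

lemma bform_scaleR_left: "bform Q (c *\<^sub>R x) y = c * bform Q x y"
  and bform_scaleR_right: "bform Q x (c *\<^sub>R y) = c * bform Q x y"
  by (simp_all add: bform_def matrix_vector_mult_scaleR)

lemma open_positive_cone: "open {x. bform (Q::real^'n^'n) x x > 0}"
proof -
  have "continuous_on UNIV (\<lambda>x::real^'n. bform Q x x)"
    unfolding bform_def by (intro continuous_intros matrix_vector_mult_linear_continuous_on)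
  then show ?thesis using open_Collect_less[OF continuous_on_const] by simp
qed

lemma positive_cone_component_scaleR:
  assumes "y \<in> connected_component_set {x. bform Q x x > 0} x0" "c > 0"
  shows "c *\<^sub>R y \<in> connected_component_set {x. bform Q x x > 0} x0"
proof -
  let ?P = "{x. bform Q x x > 0}"
  have "bform Q y y > 0" using assms(1) connected_component_subset by blast
  then have ray: "(\<lambda>t. t *\<^sub>R y) ` {0<..} \<subseteq> ?P"
    by (auto simp: bform_scaleR_left bform_scaleR_right)
  have "connected ((\<lambda>t. t *\<^sub>R y) ` {0<..})"
    by (intro connected_continuous_image continuous_intros connected_Ioi)
  moreover have "y \<in> (\<lambda>t. t *\<^sub>R y) ` {0<..}" by (rule image_eqI[of _ _ 1]) auto
  ultimately have "(\<lambda>t. t *\<^sub>R y) ` {0<..} \<subseteq> connected_component_set ?P y"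
    using ray by (intro connected_component_maximal)
  also have "\<dots> = connected_component_set ?P x0"
    using assms(1) by (rule connected_component_eq)
  finally show ?thesis using assms(2) by blast
qed

definition off_walls :: "real^'n^'n \<Rightarrow> (real^'n) set \<Rightarrow> (real^'n) set \<Rightarrow> (real^'n) set" where
  "off_walls Q L C = hyp_space Q C - (\<Union>r\<in>roots Q L. {x. bform Q x r = 0})"

lemma chamber_iff_off_walls:
  "chamber Q L C D \<longleftrightarrow> (\<exists>x\<in>off_walls Q L C. D = connected_component_set (off_walls Q L C) x)"
  unfolding chamber_def off_walls_def Let_def ..

lemma off_walls_antimono: "L \<subseteq> L' \<Longrightarrow> off_walls Q L' C \<subseteq> off_walls Q L C"
  unfolding off_walls_def roots_def by blast

lemma negligible_root_walls:
  fixes L :: "(real^'n) set"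
  assumes "full_lattice L"
  shows "negligible (\<Union>r\<in>roots Q L. {x. bform Q x r = 0})"
proof (rule negligible_countable_Union)
  obtain b :: "'n \<Rightarrow> real^'n" where "L = zspan b"
    using assms by (rule full_lattice_basis)
  then show "countable ((\<lambda>r. {x. bform Q x r = 0}) ` roots Q L)"
    using countable_zspan[of b] unfolding roots_def by (auto intro: countable_subset)
next
  fix W assume "W \<in> (\<lambda>r. {x. bform Q x r = 0}) ` roots Q L"
  then obtain r where r: "bform Q r r = -2" and W: "W = {x. (Q *v r) \<bullet> x = 0}"
    unfolding roots_def by (auto simp: bform_def inner_commute)
  then have "Q *v r \<noteq> 0" by (auto simp: bform_def)
  then show "negligible W" unfolding W by (intro negligible_hyperplane) simp
qed

lemma off_walls_nonempty:
  assumes "full_lattice L" "bform Q x0 x0 > 0"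
    and C: "C = connected_component_set {x. bform Q x x > 0} x0"
  obtains z where "z \<in> off_walls Q L C"
proof -
  let ?W = "\<Union>r\<in>roots Q L. {x. bform Q x r = 0}"
  have "open C" unfolding C using open_positive_cone by (rule open_connected_component)
  moreover have "x0 \<in> C" unfolding C using assms(2) by (simp add: connected_component_refl)
  ultimately have "\<not> C \<subseteq> ?W"
    using negligible_root_walls[OF assms(1)] open_not_negligible negligible_subset by blast
  then obtain y where y: "y \<in> C" "y \<notin> ?W" by blast
  define s where "s = bform Q y y"
  have "s > 0" using y(1) connected_component_subset unfolding C s_def by blast
  define z where "z = (1 / sqrt s) *\<^sub>R y"
  have "z \<in> C" using y(1) \<open>s > 0\<close> unfolding C z_def
    by (intro positive_cone_component_scaleR) auto
  moreover have "bform Q z z = 1"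
    using \<open>s > 0\<close> by (simp add: z_def bform_scaleR_left bform_scaleR_right s_def[symmetric])
  moreover have "z \<notin> ?W"
    using y(2) \<open>s > 0\<close> by (simp add: z_def bform_scaleR_left)
  ultimately show ?thesis using that unfolding off_walls_def hyp_space_def by blast
qed

lemma nested_chambers_exist:
  assumes "full_lattice L'" "L \<subseteq> L'" "bform Q x0 x0 > 0"
    and "C = connected_component_set {x. bform Q x x > 0} x0"
  shows "\<exists>D D'. chamber Q L C D \<and> chamber Q L' C D' \<and> D' \<subseteq> D"
proof -
  obtain z where z': "z \<in> off_walls Q L' C" using off_walls_nonempty[OF assms(1,3,4)] .
  have sub: "off_walls Q L' C \<subseteq> off_walls Q L C" using assms(2) by (rule off_walls_antimono)
  have "chamber Q L C (connected_component_set (off_walls Q L C) z)"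
    using z' sub by (auto simp: chamber_iff_off_walls)
  moreover have "chamber Q L' C (connected_component_set (off_walls Q L' C) z)"
    using z' by (auto simp: chamber_iff_off_walls)
  moreover have "connected_component_set (off_walls Q L' C) z \<subseteq> connected_component_set (off_walls Q L C) z"
    using sub by (rule connected_component_mono)
  ultimately show ?thesis by blast
qed

section \<open>Symmetries of nested chambers\<close>

definition isometry :: "real^'n^'n \<Rightarrow> real^'n^'n \<Rightarrow> bool" where
  "isometry Q g \<longleftrightarrow> (\<forall>x y. bform Q (g *v x) (g *v y) = bform Q x y)"

lemma isometry_if_spanning:
  fixes Q g :: "real^'n^'n"
  assumes "span X = UNIV" and "\<And>x y. x \<in> X \<Longrightarrow> y \<in> X \<Longrightarrow> bform Q (g *v x) (g *v y) = bform Q x y"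
  shows "isometry Q g"
proof -
  have left: "bform Q (g *v x) (g *v y) = bform Q x y" if "y \<in> X" for x y
  proof -
    have "x \<in> span X" using assms(1) by simp
    then show ?thesis
      by (induction rule: span_induct_alt)
        (use assms(2) that in \<open>auto simp: bform_def matrix_vector_right_distrib
          matrix_vector_mult_scaleR inner_add_left\<close>)
  qed
  have "bform Q (g *v x) (g *v y) = bform Q x y" for x y
  proof -
    have "y \<in> span X" using assms(1) by simp
    then show ?thesis
      by (induction rule: span_induct_alt)
        (use left in \<open>auto simp: bform_def matrix_vector_right_distrib
          matrix_vector_mult_scaleR inner_add_right\<close>)
  qed
  then show ?thesis unfolding isometry_def by blast
qed

lemma isometry_right_inverse: "isometry Q g \<Longrightarrow> g ** h = mat 1 \<Longrightarrow> isometry Q h"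
  unfolding isometry_def by (metis matrix_vector_mul_assoc matrix_vector_mul_lid)

lemma image_matrix_mult: "(\<lambda>x. (g ** h) *v x) ` X = (\<lambda>x. g *v x) ` (\<lambda>x. h *v x) ` X"
  by (simp add: image_image matrix_vector_mul_assoc)

lemma image_left_inverse:
  assumes "h ** g = mat 1" "(\<lambda>x. g *v x) ` X = X"
  shows "(\<lambda>x. h *v x) ` X = X"
  using image_matrix_mult[of h g X] assms by simp

lemma invertible_if_image_full_lattice:
  fixes g :: "real^'n^'n"
  assumes "full_lattice L" "(\<lambda>x. g *v x) ` L = L"
  shows "invertible g"
proof -
  have "span ((\<lambda>x. g *v x) ` L) = (\<lambda>x. g *v x) ` span L"
    using matrix_vector_mul_linear by (rule linear_span_image)
  then have "surj ((*v) g)" using assms span_full_lattice by metis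
  then show ?thesis
    using invertible_right_inverse matrix_right_invertible_surjective by blast
qed

lemma Oplus_isometry: "full_lattice L \<Longrightarrow> g \<in> Oplus Q L C \<Longrightarrow> isometry Q g"
  by (rule isometry_if_spanning[of L]) (auto simp: span_full_lattice Oplus_def)

lemma Aut_chamber_mult:
  assumes "g \<in> Aut_chamber Q L C D" "h \<in> Aut_chamber Q L C D"
  shows "g ** h \<in> Aut_chamber Q L C D"
proof -
  have image: "(\<lambda>x. (g ** h) *v x) ` X = X"
    if "(\<lambda>x. g *v x) ` X = X" "(\<lambda>x. h *v x) ` X = X" for X
    using that by (simp add: image_matrix_mult)
  have "bform Q ((g ** h) *v x) ((g ** h) *v y) = bform Q x y" if "x \<in> L" "y \<in> L" for x y
  proof -
    have "h *v x \<in> L" "h *v y \<in> L" using that assms(2) unfolding Aut_chamber_def Oplus_def by blast+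
    then show ?thesis
      using that assms unfolding Aut_chamber_def Oplus_def by (simp add: matrix_vector_mul_assoc[symmetric])
  qed
  then show ?thesis using assms image unfolding Aut_chamber_def Oplus_def by auto
qed

lemma Aut_chamber_inverse:
  assumes "full_lattice L" "g \<in> Aut_chamber Q L C D"
  obtains h where "h \<in> Aut_chamber Q L C D" "g ** h = mat 1" "h ** g = mat 1"
proof -
  have g: "(\<lambda>x. g *v x) ` L = L" "(\<lambda>x. g *v x) ` C = C" "(\<lambda>x. g *v x) ` D = D"
    using assms(2) unfolding Aut_chamber_def Oplus_def by auto
  obtain h where h: "g ** h = mat 1" "h ** g = mat 1"
    using invertible_if_image_full_lattice[OF assms(1) g(1)] unfolding invertible_def by blast
  have "isometry Q h"
    using Oplus_isometry[OF assms(1)] assms(2) h(1) isometry_right_inverse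
    unfolding Aut_chamber_def by blast
  then have "h \<in> Aut_chamber Q L C D"
    using image_left_inverse[OF h(2)] g unfolding Aut_chamber_def Oplus_def isometry_def by auto
  with h show ?thesis using that by blast
qed

lemma isometry_image_off_walls:
  assumes "isometry Q k" "(\<lambda>x. k *v x) ` C = C" "(\<lambda>x. k *v x) ` L = L"
  shows "(\<lambda>x. k *v x) ` off_walls Q L C \<subseteq> off_walls Q L C"
proof (rule image_subsetI)
  fix x assume x: "x \<in> off_walls Q L C"
  have "k *v x \<in> hyp_space Q C"
    using x assms(1,2) unfolding off_walls_def hyp_space_def isometry_def by auto
  moreover have "bform Q (k *v x) r \<noteq> 0" if "r \<in> roots Q L" for r
  proof -
    obtain r' where "r' \<in> L" "r = k *v r'"
      using \<open>r \<in> roots Q L\<close> assms(3) unfolding roots_def by blast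
    then have "r' \<in> roots Q L" "bform Q (k *v x) r = bform Q x r'"
      using \<open>r \<in> roots Q L\<close> assms(1) unfolding roots_def isometry_def by auto
    then show ?thesis using x unfolding off_walls_def by auto
  qed
  ultimately show "k *v x \<in> off_walls Q L C" unfolding off_walls_def by blast
qed

lemma Aut_chamber_image_subset:
  assumes "full_lattice L'" "chamber Q L C D" "chamber Q L' C D'" "D' \<subseteq> D"
    and "k \<in> Aut_chamber Q L' C D'" "(\<lambda>x. k *v x) ` L = L"
  shows "(\<lambda>x. k *v x) ` D \<subseteq> D"
proof -
  let ?S = "off_walls Q L C"
  obtain y where y: "D = connected_component_set ?S y"
    using assms(2) by (auto simp: chamber_iff_off_walls)
  obtain y' where "y' \<in> off_walls Q L' C" "D' = connected_component_set (off_walls Q L' C) y'"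
    using assms(3) by (auto simp: chamber_iff_off_walls)
  then have "y' \<in> D'" by (simp add: connected_component_refl)
  have k: "isometry Q k" "(\<lambda>x. k *v x) ` C = C" "(\<lambda>x. k *v x) ` D' = D'"
    using assms(5) Oplus_isometry[OF assms(1)] unfolding Aut_chamber_def Oplus_def by auto
  have "k *v y' \<in> (\<lambda>x. k *v x) ` D" using \<open>y' \<in> D'\<close> assms(4) by blast
  moreover have "connected ((\<lambda>x. k *v x) ` D)"
    unfolding y by (intro connected_linear_image matrix_vector_mul_linear connected_connected_component)
  moreover have "(\<lambda>x. k *v x) ` D \<subseteq> ?S"
    using isometry_image_off_walls[OF k(1,2) assms(6)] connected_component_subset y by blast
  ultimately have "(\<lambda>x. k *v x) ` D \<subseteq> connected_component_set ?S (k *v y')"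
    by (rule connected_component_maximal)
  also have "\<dots> = D"
    using \<open>y' \<in> D'\<close> k(3) assms(4) y by (metis connected_component_eq image_eqI subsetD)
  finally show ?thesis .
qed

lemma stabilizer_in_Aut_chamber:
  assumes "full_lattice L'" "chamber Q L C D" "chamber Q L' C D'" "D' \<subseteq> D"
    and "k \<in> Aut_chamber Q L' C D'" "(\<lambda>x. k *v x) ` L = L"
  shows "k \<in> Aut_chamber Q L C D"
proof -
  obtain h where h: "h \<in> Aut_chamber Q L' C D'" "k ** h = mat 1" "h ** k = mat 1"
    using Aut_chamber_inverse[OF assms(1,5)] .
  have "(\<lambda>x. h *v x) ` L = L" using h(3) assms(6) by (rule image_left_inverse)
  then have "(\<lambda>x. h *v x) ` D \<subseteq> D"
    using Aut_chamber_image_subset[OF assms(1-4) h(1)] by blast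
  moreover have "D = (\<lambda>x. k *v x) ` (\<lambda>x. h *v x) ` D"
    by (simp add: h(2) flip: image_matrix_mult)
  ultimately have "D \<subseteq> (\<lambda>x. k *v x) ` D" by (metis image_mono)
  then have "(\<lambda>x. k *v x) ` D = D"
    using Aut_chamber_image_subset[OF assms] by blast
  moreover have "isometry Q k" "(\<lambda>x. k *v x) ` C = C"
    using assms(5) Oplus_isometry[OF assms(1)] unfolding Aut_chamber_def Oplus_def by auto
  ultimately show ?thesis
    using assms(6) unfolding Aut_chamber_def Oplus_def isometry_def by auto
qed

lemma finite_orbit_if_finitely_many_cosets:
  fixes G H :: "(real^'n^'n) set" and f :: "real^'n^'n \<Rightarrow> 'a"
  assumes "finite (f ` G)"
    and "\<And>g h. g \<in> G \<Longrightarrow> h \<in> G \<Longrightarrow> f g = f h \<Longrightarrow> \<exists>k\<in>H. g = h ** k"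
    and "finite ((\<lambda>k. k *v v) ` H)"
  shows "finite ((\<lambda>g. g *v v) ` G)"
proof -
  define rep where "rep M = (SOME h. h \<in> G \<and> f h = M)" for M
  have "(\<lambda>g. g *v v) ` G \<subseteq> (\<Union>M\<in>f ` G. (\<lambda>w. rep M *v w) ` (\<lambda>k. k *v v) ` H)"
  proof
    fix y assume "y \<in> (\<lambda>g. g *v v) ` G"
    then obtain g where g: "g \<in> G" "y = g *v v" by blast
    have "rep (f g) \<in> G \<and> f (rep (f g)) = f g"
      unfolding rep_def using g(1) by (rule someI[of _ g, OF conjI]) simp
    then obtain k where "k \<in> H" "g = rep (f g) ** k" using assms(2) g(1) by metis
    then have "y = rep (f g) *v (k *v v)" using g(2) by (simp add: matrix_vector_mul_assoc)
    then show "y \<in> (\<Union>M\<in>f ` G. (\<lambda>w. rep M *v w) ` (\<lambda>k. k *v v) ` H)"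
      using g(1) \<open>k \<in> H\<close> by blast
  qed
  moreover have "finite (\<Union>M\<in>f ` G. (\<lambda>w. rep M *v w) ` (\<lambda>k. k *v v) ` H)"
    by (intro finite_UN_I assms(1) finite_imageI assms(3))
  ultimately show ?thesis by (rule finite_subset)
qed

lemma exceptional_lattice_mono:
  assumes "full_lattice L" "full_lattice L'" "L \<subseteq> L'"
    and "chamber Q L C D" "chamber Q L' C D'" "D' \<subseteq> D"
  shows "exceptional_lattice Q L C D \<subseteq> exceptional_lattice Q L' C D'"
proof
  fix v assume v: "v \<in> exceptional_lattice Q L C D"
  let ?G = "Aut_chamber Q L' C D'" and ?f = "\<lambda>g. (\<lambda>x. g *v x) ` L"
  have "finite (?f ` ?G)"
    using finite_images_of_sublattice[OF assms(1-3)]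
    by (rule finite_subset[rotated]) (auto simp: Aut_chamber_def Oplus_def)
  moreover have "\<exists>k\<in>Aut_chamber Q L C D. g = h ** k"
    if g: "g \<in> ?G" and h: "h \<in> ?G" and eq: "?f g = ?f h" for g h
  proof -
    obtain h' where h': "h' \<in> ?G" "h ** h' = mat 1" "h' ** h = mat 1"
      using Aut_chamber_inverse[OF assms(2) h] .
    have "(\<lambda>x. (h' ** g) *v x) ` L = L"
      using eq h'(3) by (simp add: image_matrix_mult flip: image_matrix_mult[of h' h])
    then have "h' ** g \<in> Aut_chamber Q L C D"
      using stabilizer_in_Aut_chamber[OF assms(2,4-6) Aut_chamber_mult[OF h'(1) g]] by blast
    moreover have "g = h ** (h' ** g)" using h'(2) by (simp add: matrix_mul_assoc)
    ultimately show ?thesis by blast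
  qed
  moreover have "finite ((\<lambda>k. k *v v) ` Aut_chamber Q L C D)"
    using v by (simp add: exceptional_lattice_def)
  ultimately have "finite ((\<lambda>g. g *v v) ` ?G)" by (rule finite_orbit_if_finitely_many_cosets)
  then show "v \<in> exceptional_lattice Q L' C D'"
    using v assms(3) by (auto simp: exceptional_lattice_def)
qed

theorem lemma3p1:
  fixes Q :: "real^'n^'n" and L L' C :: "(real^'n) set" and x0 :: "real^'n"
  assumes "hyperbolic_form Q"
    and "even_lattice Q L"
    and "even_lattice Q L'"
    and "L \<subseteq> L'"
    and "bform Q x0 x0 > 0"
    and "C = connected_component_set {x. bform Q x x > 0} x0"
  shows "(\<exists>D D'. chamber Q L C D \<and> chamber Q L' C D' \<and> D' \<subseteq> D) \<and>
         (\<forall>D D'. chamber Q L C D \<and> chamber Q L' C D' \<and> D' \<subseteq> D \<longrightarrow>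
            exceptional_lattice Q L C D \<subseteq> exceptional_lattice Q L' C D')"
proof -
  have L: "full_lattice L" and L': "full_lattice L'"
    using assms(2,3) by (simp_all add: even_lattice_def)
  show ?thesis
    using nested_chambers_exist[OF L' assms(4-6)] exceptional_lattice_mono[OF L L' assms(4)]
    by blast
qed

end
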